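(* Fix $1\le k\le K$. Then: (a) $f\mapsto\pi_k(f):C(X)\to\Gamma(\mathscr M_k)$ is a $*$-homomorphism; (b) $\xi\mapsto\tau_k(\xi):\mathcal E_Y\to\Gamma(\mathscr M_k)$ is linear; (c) $\pi_k(\langle\xi,\eta\rangle_{\mathcal E})=\tau_k(\xi)^*\tau_k(\eta)$ for all $\xi,\eta\in\mathcal E_Y$; (d) $\tau_k(f\cdot\xi)=\pi_k(f)\tau_k(\xi)=\tau_k(\xi)\pi_k(f\circ\alpha)$ for all $f\in C(X)$, $\xi\in\mathcal E_Y$; (e) $\pi_k({}_{\mathcal E_Y}\langle\xi,\eta\rangle)=\tau_k(\xi)\tau_k(\eta)^*$ for all $\xi,\eta\in\mathcal E_Y$, where ${}_{\mathcal E_Y}\langle\xi,\eta\rangle=\langle\eta,\xi\rangle_{\mathcal E}\circ\alpha^{-1}$.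
   Context: Let $X$ be an infinite compact metric space, $\alpha:X\to X$ a minimal homeomorphism, $\mathscr V$ a Hermitian complex line bundle over $X$, and $Y\subset X$ closed with non-empty interior. $\mathcal E=\Gamma(\mathscr V,\alpha)$ is the Hilbert $C(X)$-bimodule of continuous sections of $\mathscr V$ with right action $(\xi f)(x)=\xi(x)f(x)$, right inner product $\langle\xi,\eta\rangle_{\mathcal E}(x)=\langle\xi(x),\eta(x)\rangle_{\mathscr V_x}$, left action $f\cdot\xi=\xi\,(f\circ\alpha)$ and left inner product $\langle\eta,\xi\rangle_{\mathcal E}\circ\alpha^{-1}$. $\mathcal E_Y=C_0(X\setminus Y)\mathcal E$. For $y\in Y$ let $r_Y(y)=\min\{n\ge1:\alpha^n(y)\in Y\}$, with distinct values $r_1<\dots<r_K$, and $Y_k=\{y\in Y:r_Y(y)=r_k\}$. Let $\mathscr V^{(0)}=X\times\mathbb C$, $\mathscr V^{(n)}=(\alpha^{n-1})^*\mathscr V\otimes\cdots\otimes\alpha^*\mathscr V\otimes\mathscr V$ (fibre $\mathscr V_{\alpha^{n-1}(x)}\otimes\cdots\otimes\mathscr V_x$, with the hermitian structure induced from $\mathscr V$), $\mathscr D^{(n)}=\mathscr V^{(0)}\oplus\cdots\oplus\mathscr V^{(n-1)}$ (orthogonal direct sum), $\mathscr M_k=\mathrm{End}(\mathscr D^{(r_k)})|_{\overline{Y_k}}$ and $\Gamma(\mathscr M_k)$ the C*-algebra of its continuous sections with pointwise composition and fibrewise adjoint. For $x\in\overline{Y_k}$, $(a_0,\dots,a_{r_k-1})\in\mathscr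 D^{(r_k)}_x$, $f\in C(X)$, $\xi\in\mathcal E_Y$: $\pi_k(f)(x)(a_0,\dots,a_{r_k-1})=(f(x)a_0,\dots,f(\alpha^{r_k-1}(x))a_{r_k-1})$ and $\tau_k(\xi)(x)(a_0,\dots,a_{r_k-1})=(0,\xi(x)\otimes a_0,\dots,\xi(\alpha^{r_k-2}(x))\otimes a_{r_k-2})$, with $\mathscr V_{\alpha^i(x)}\otimes\mathscr V^{(i)}_x=\mathscr V^{(i+1)}_x$ (and $\xi(x)\otimes a_0=\xi(x)a_0$). *)

theory Defs
  imports "HOL-Analysis.Analysis"
begin

definition minimal_map :: "('x::topological_space \<Rightarrow> 'x) \<Rightarrow> bool" where
  "minimal_map \<alpha> \<longleftrightarrow> (\<forall>A. closed A \<and> \<alpha> ` A = A \<longrightarrow> A = {} \<or> A = UNIV)"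

definition first_return :: "('x \<Rightarrow> 'x) \<Rightarrow> 'x set \<Rightarrow> 'x \<Rightarrow> nat" where
  "first_return \<alpha> Y y = (LEAST n. 1 \<le> n \<and> (\<alpha> ^^ n) y \<in> Y)"

definition ret_values :: "('x \<Rightarrow> 'x) \<Rightarrow> 'x set \<Rightarrow> nat set" where
  "ret_values \<alpha> Y = first_return \<alpha> Y ` Y"

text \<open>K = number of distinct return times, r k = k-th smallest (k = 1..K)\<close>
definition num_ret :: "('x \<Rightarrow> 'x) \<Rightarrow> 'x set \<Rightarrow> nat" where
  "num_ret \<alpha> Y = card (ret_values \<alpha> Y)"

definition ret_time :: "('x \<Rightarrow> 'x) \<Rightarrow> 'x set \<Rightarrow> nat \<Rightarrow> nat" where
  "ret_time \<alpha> Y k = sorted_list_of_set (ret_values \<alpha> Y) ! (k - 1)"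

definition ret_piece :: "('x \<Rightarrow> 'x) \<Rightarrow> 'x set \<Rightarrow> nat \<Rightarrow> 'x set" where
  "ret_piece \<alpha> Y k = {y \<in> Y. first_return \<alpha> Y y = ret_time \<alpha> Y k}"

section \<open>Hermitian line bundles, realised inside a trivial bundle X \<times> C^N\<close>

text \<open>Vectors of C^N are functions 'n \<Rightarrow> complex ('n finite), with standard
  Hermitian inner product (conjugate-linear in the first variable).\<close>

definition vscale :: "complex \<Rightarrow> ('n \<Rightarrow> complex) \<Rightarrow> ('n \<Rightarrow> complex)" where
  "vscale c v = (\<lambda>j. c * v j)"

definition vinner :: "('n::finite \<Rightarrow> complex) \<Rightarrow> ('n \<Rightarrow> complex) \<Rightarrow> complex" where
  "vinner u w = (\<Sum>j\<in>UNIV. cnj (u j) * w j)"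

text \<open>A Hermitian line bundle: a continuously varying (locally trivial) family of
  complex lines L x in C^N, with the Hermitian structure inherited from C^N.\<close>
definition line_bundle :: "('x::topological_space \<Rightarrow> ('n::finite \<Rightarrow> complex) set) \<Rightarrow> bool" where
  "line_bundle L \<longleftrightarrow>
     (\<forall>x. \<exists>v. (\<exists>j. v j \<noteq> 0) \<and> L x = {vscale c v | c. True}) \<and>
     (\<forall>x. \<exists>U s. open U \<and> x \<in> U \<and> continuous_on U s \<and> (\<forall>y\<in>U. (\<exists>j. s y j \<noteq> 0) \<and> s y \<in> L y))"

text \<open>Tensors of rank i: functions on lists of indices (supported on length i).\<close>
type_synonym 'n tensor = "'n list \<Rightarrow> complex"

definition etensor :: "('n \<Rightarrow> complex) \<Rightarrow> 'n tensor \<Rightarrow> 'n tensor" where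
  "etensor v a = (\<lambda>l. case l of [] \<Rightarrow> 0 | j # l' \<Rightarrow> v j * a l')"

definition tinner :: "nat \<Rightarrow> ('n::finite) tensor \<Rightarrow> 'n tensor \<Rightarrow> complex" where
  "tinner i a b = (\<Sum>l\<in>{l::'n list. length l = i}. cnj (a l) * b l)"

text \<open>Fibre of V^(i) at x: V_{alpha^(i-1) x} \<otimes> ... \<otimes> V_x\<close>
primrec Vfib :: "('x \<Rightarrow> ('n \<Rightarrow> complex) set) \<Rightarrow> ('x \<Rightarrow> 'x) \<Rightarrow> nat \<Rightarrow> 'x \<Rightarrow> 'n tensor set" where
  "Vfib L \<alpha> 0 x = {(\<lambda>l. if l = [] then c else 0) | c. True}"
| "Vfib L \<alpha> (Suc i) x = {etensor v a | v a. v \<in> L ((\<alpha> ^^ i) x) \<and> a \<in> Vfib L \<alpha> i x}"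

text \<open>Elements of D^(r)_x = V^(0)_x \<oplus> ... \<oplus> V^(r-1)_x\<close>
type_synonym 'n dvec = "nat \<Rightarrow> 'n tensor"

definition Dfib :: "('x \<Rightarrow> ('n \<Rightarrow> complex) set) \<Rightarrow> ('x \<Rightarrow> 'x) \<Rightarrow> nat \<Rightarrow> 'x \<Rightarrow> 'n dvec set" where
  "Dfib L \<alpha> r x = {a. (\<forall>i<r. a i \<in> Vfib L \<alpha> i x) \<and> (\<forall>i\<ge>r. a i = (\<lambda>l. 0))}"

definition Dinner :: "nat \<Rightarrow> ('n::finite) dvec \<Rightarrow> 'n dvec \<Rightarrow> complex" where
  "Dinner r a b = (\<Sum>i<r. tinner i (a i) (b i))"

definition dscale :: "complex \<Rightarrow> 'n dvec \<Rightarrow> 'n dvec" where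
  "dscale c a = (\<lambda>i l. c * a i l)"

definition dadd :: "'n dvec \<Rightarrow> 'n dvec \<Rightarrow> 'n dvec" where
  "dadd a b = (\<lambda>i l. a i l + b i l)"

definition is_end_section ::
  "'x::topological_space set \<Rightarrow> ('x \<Rightarrow> 'n dvec set) \<Rightarrow> ('x \<Rightarrow> 'n dvec \<Rightarrow> 'n dvec) \<Rightarrow> bool" where
  "is_end_section Z D S \<longleftrightarrow>
     (\<forall>x\<in>Z. \<forall>a\<in>D x. S x a \<in> D x) \<and>
     (\<forall>x\<in>Z. \<forall>a\<in>D x. \<forall>b\<in>D x. \<forall>c. S x (dadd (dscale c a) b) = dadd (dscale c (S x a)) (S x b)) \<and>
     (\<forall>a. continuous_on Z a \<and> (\<forall>x\<in>Z. a x \<in> D x) \<longrightarrow> continuous_on Z (\<lambda>x. S x (a x)))"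

definition sect_eq ::
  "'x set \<Rightarrow> ('x \<Rightarrow> 'n dvec set) \<Rightarrow> ('x \<Rightarrow> 'n dvec \<Rightarrow> 'n dvec) \<Rightarrow> ('x \<Rightarrow> 'n dvec \<Rightarrow> 'n dvec) \<Rightarrow> bool" where
  "sect_eq Z D S T \<longleftrightarrow> (\<forall>x\<in>Z. \<forall>a\<in>D x. S x a = T x a)"

definition scomp :: "('x \<Rightarrow> 'n dvec \<Rightarrow> 'n dvec) \<Rightarrow> ('x \<Rightarrow> 'n dvec \<Rightarrow> 'n dvec) \<Rightarrow> ('x \<Rightarrow> 'n dvec \<Rightarrow> 'n dvec)" where
  "scomp S T = (\<lambda>x a. S x (T x a))"

definition sadd :: "('x \<Rightarrow> 'n dvec \<Rightarrow> 'n dvec) \<Rightarrow> ('x \<Rightarrow> 'n dvec \<Rightarrow> 'n dvec) \<Rightarrow> ('x \<Rightarrow> 'n dvec \<Rightarrow> 'n dvec)" where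
  "sadd S T = (\<lambda>x a. dadd (S x a) (T x a))"

definition sscale :: "complex \<Rightarrow> ('x \<Rightarrow> 'n dvec \<Rightarrow> 'n dvec) \<Rightarrow> ('x \<Rightarrow> 'n dvec \<Rightarrow> 'n dvec)" where
  "sscale c S = (\<lambda>x a. dscale c (S x a))"

definition op_adj :: "'v set \<Rightarrow> ('v \<Rightarrow> 'v \<Rightarrow> complex) \<Rightarrow> ('v \<Rightarrow> 'v) \<Rightarrow> 'v \<Rightarrow> 'v" where
  "op_adj D ip T a = (THE c. c \<in> D \<and> (\<forall>b\<in>D. ip c b = ip a (T b)))"

definition sadj :: "nat \<Rightarrow> ('x \<Rightarrow> ('n::finite) dvec set) \<Rightarrow> ('x \<Rightarrow> 'n dvec \<Rightarrow> 'n dvec) \<Rightarrow> ('x \<Rightarrow> 'n dvec \<Rightarrow> 'n dvec)" where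
  "sadj r D S = (\<lambda>x. op_adj (D x) (Dinner r) (S x))"

definition Esec :: "('x::topological_space \<Rightarrow> ('n::finite \<Rightarrow> complex) set) \<Rightarrow> ('x \<Rightarrow> 'n \<Rightarrow> complex) set" where
  "Esec L = {\<xi>. continuous_on UNIV \<xi> \<and> (\<forall>x. \<xi> x \<in> L x)}"

definition lact :: "('x \<Rightarrow> 'x) \<Rightarrow> ('x \<Rightarrow> complex) \<Rightarrow> ('x \<Rightarrow> 'n \<Rightarrow> complex) \<Rightarrow> ('x \<Rightarrow> 'n \<Rightarrow> complex)" where
  "lact \<alpha> f \<xi> = (\<lambda>x. vscale (f (\<alpha> x)) (\<xi> x))"

definition rinner :: "('x \<Rightarrow> ('n::finite) \<Rightarrow> complex) \<Rightarrow> ('x \<Rightarrow> 'n \<Rightarrow> complex) \<Rightarrow> 'x \<Rightarrow> complex" where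
  "rinner \<xi> \<eta> = (\<lambda>x. vinner (\<xi> x) (\<eta> x))"

definition linner :: "('x \<Rightarrow> 'x) \<Rightarrow> ('x \<Rightarrow> ('n::finite) \<Rightarrow> complex) \<Rightarrow> ('x \<Rightarrow> 'n \<Rightarrow> complex) \<Rightarrow> 'x \<Rightarrow> complex" where
  "linner \<alpha> \<xi> \<eta> = (\<lambda>x. rinner \<eta> \<xi> (inv \<alpha> x))"

definition C0_compl :: "'x::topological_space set \<Rightarrow> ('x \<Rightarrow> complex) set" where
  "C0_compl Y = {f. continuous_on UNIV f \<and> (\<forall>y\<in>Y. f y = 0)}"

text \<open>E_Y = C_0(X \ Y) E\<close>
definition EY :: "('x::topological_space \<Rightarrow> ('n::finite \<Rightarrow> complex) set) \<Rightarrow> ('x \<Rightarrow> 'x) \<Rightarrow> 'x set \<Rightarrow> ('x \<Rightarrow> 'n \<Rightarrow> complex) set" where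
  "EY L \<alpha> Y = {lact \<alpha> f \<xi> | f \<xi>. f \<in> C0_compl Y \<and> \<xi> \<in> Esec L}"

definition pi_r :: "('x \<Rightarrow> 'x) \<Rightarrow> ('x \<Rightarrow> complex) \<Rightarrow> 'x \<Rightarrow> 'n dvec \<Rightarrow> 'n dvec" where
  "pi_r \<alpha> f = (\<lambda>x a. (\<lambda>i l. f ((\<alpha> ^^ i) x) * a i l))"

definition tau_r :: "('x \<Rightarrow> 'x) \<Rightarrow> nat \<Rightarrow> ('x \<Rightarrow> 'n \<Rightarrow> complex) \<Rightarrow> 'x \<Rightarrow> 'n dvec \<Rightarrow> 'n dvec" where
  "tau_r \<alpha> r \<xi> = (\<lambda>x a. (\<lambda>i. if i = 0 \<or> r \<le> i then (\<lambda>l. 0)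
                              else etensor (\<xi> ((\<alpha> ^^ (i - 1)) x)) (a (i - 1))))"

end

theory Submission
  imports Defs
begin

(* pi_k and tau_k act fibrewise on D_x = V^(0)_x + ... + V^(r-1)_x, so the algebraic identities
   of (a), (b), (d) hold pointwise, and continuity reduces to continuity of coordinates. Since the
   inner product on D_x is definite, adjoints are unique, and the adjoint of tau_k(eta) at x is
   explicit: it contracts the degree i+1 component with eta(alpha^i x) and discards degree 0.
   With it, (c) and (e) become pointwise identities in every degree but the extreme ones; there
   they hold because sections of E_Y vanish on alpha^-1(Y): the point alpha^(r-1) x lies there,
   as every point of Y returns to Y (minimality), and so does alpha^-1 x for x in Y.
   In (e) the remaining degrees use that V is a line bundle:
   <eta, xi> v = <eta, v> xi for v, xi in the same fibre. *)

section \<open>Line bundles and their tensor powers\<close>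

lemma line_bundle_fibre:
  assumes "line_bundle L"
  obtains v where "L x = {vscale c v | c. True}"
  using assms unfolding line_bundle_def by meson

lemma line_bundle_vscale_mem:
  assumes "line_bundle L" "v \<in> L x"
  shows "vscale c v \<in> L x"
proof -
  obtain v0 where L: "L x = {vscale c v0 | c. True}" using line_bundle_fibre[OF assms(1)] .
  then obtain c1 where "v = vscale c1 v0" using assms(2) by auto
  then have "vscale c v = vscale (c * c1) v0" by (simp add: vscale_def fun_eq_iff)
  then show ?thesis unfolding L by auto
qed

lemma line_bundle_fibre_nonempty:
  assumes "line_bundle L"
  obtains v where "v \<in> L x"
  using line_bundle_fibre[OF assms] by blast

lemma line_bundle_common_generator:
  assumes "line_bundle L" "v \<in> L x" "w \<in> L x"
  obtains v0 c1 c2 where "v0 \<in> L x" "v = vscale c1 v0" "w = vscale c2 v0"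
proof -
  obtain v0 where L: "L x = {vscale c v0 | c. True}" using line_bundle_fibre[OF assms(1)] .
  have "v0 = vscale 1 v0" by (simp add: vscale_def)
  then show ?thesis using that assms(2,3) unfolding L by auto
qed

lemma vinner_rank_one:
  assumes "line_bundle L" "v \<in> L x" "w \<in> L x"
  shows "vinner u w * v h = vinner u v * w h"
proof -
  obtain v0 c1 c2 where "v = vscale c1 v0" "w = vscale c2 v0"
    using line_bundle_common_generator[OF assms] .
  then show ?thesis
    by (simp add: vinner_def vscale_def sum_distrib_left sum_distrib_right algebra_simps)
qed

lemma Vfib_scale: "a \<in> Vfib L \<alpha> i x \<Longrightarrow> (\<lambda>l. c * a l) \<in> Vfib L \<alpha> i x"
proof (induction i arbitrary: a)
  case 0
  then obtain d where "a = (\<lambda>l. if l = [] then d else 0)" by auto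
  then have "(\<lambda>l. c * a l) = (\<lambda>l. if l = [] then c * d else 0)" by auto
  then show ?case by auto
next
  case (Suc i)
  then obtain v a' where a: "a = etensor v a'" "v \<in> L ((\<alpha> ^^ i) x)" "a' \<in> Vfib L \<alpha> i x"
    by auto
  have "(\<lambda>l. c * a l) = etensor v (\<lambda>l. c * a' l)"
    by (auto simp: a etensor_def fun_eq_iff split: list.split)
  then show ?case using Suc.IH[OF a(3)] a(2) by auto
qed

lemma Vfib_zero:
  assumes "line_bundle L"
  shows "(\<lambda>l. 0) \<in> Vfib L \<alpha> i x"
proof (induction i)
  case 0
  have "(\<lambda>l::'a list. 0::complex) = (\<lambda>l. if l = [] then 0 else 0)" by simp
  then show ?case by (auto intro!: exI[of _ 0])
next
  case (Suc i)
  obtain v where "v \<in> L ((\<alpha> ^^ i) x)" using line_bundle_fibre_nonempty[OF assms] .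
  moreover have "(\<lambda>l. 0) = etensor v (\<lambda>l. 0)"
    by (auto simp: etensor_def fun_eq_iff split: list.split)
  ultimately show ?case using Suc by auto
qed

lemma Vfib_add:
  assumes "line_bundle L"
  shows "a \<in> Vfib L \<alpha> i x \<Longrightarrow> b \<in> Vfib L \<alpha> i x \<Longrightarrow> (\<lambda>l. a l + b l) \<in> Vfib L \<alpha> i x"
proof (induction i arbitrary: a b)
  case 0
  then obtain d e where "a = (\<lambda>l. if l = [] then d else 0)" "b = (\<lambda>l. if l = [] then e else 0)"
    by auto
  then have "(\<lambda>l. a l + b l) = (\<lambda>l. if l = [] then d + e else 0)" by auto
  then show ?case by auto
next
  case (Suc i)
  obtain v a' where a: "a = etensor v a'" "v \<in> L ((\<alpha> ^^ i) x)" "a' \<in> Vfib L \<alpha> i x"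
    using Suc.prems by auto
  obtain w b' where b: "b = etensor w b'" "w \<in> L ((\<alpha> ^^ i) x)" "b' \<in> Vfib L \<alpha> i x"
    using Suc.prems by auto
  obtain v0 c1 c2 where v0: "v0 \<in> L ((\<alpha> ^^ i) x)" "v = vscale c1 v0" "w = vscale c2 v0"
    using line_bundle_common_generator[OF assms a(2) b(2)] .
  have "(\<lambda>l. a l + b l) = etensor v0 (\<lambda>l. c1 * a' l + c2 * b' l)"
    by (auto simp: a b v0 etensor_def vscale_def fun_eq_iff algebra_simps split: list.split)
  moreover have "(\<lambda>l. c1 * a' l + c2 * b' l) \<in> Vfib L \<alpha> i x"
    using Suc.IH[OF Vfib_scale[OF a(3)] Vfib_scale[OF b(3)]] .
  ultimately show ?case using v0(1) by auto
qed

lemma Vfib_vanishes: "a \<in> Vfib L \<alpha> i x \<Longrightarrow> length l \<noteq> i \<Longrightarrow> a l = 0"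
proof (induction i arbitrary: a l)
  case 0
  then show ?case by auto
next
  case (Suc i)
  then obtain v a' where "a = etensor v a'" "a' \<in> Vfib L \<alpha> i x" by auto
  with Suc show ?case by (auto simp: etensor_def split: list.split)
qed

lemma sum_lists_length_Suc:
  "(\<Sum>l\<in>{l::'n::finite list. length l = Suc i}. g l) = (\<Sum>h\<in>UNIV. \<Sum>t\<in>{t. length t = i}. g (h # t))"
proof -
  have lists: "{l::'n list. length l = Suc i} = (\<lambda>(h, t). h # t) ` (UNIV \<times> {t. length t = i})"
    by (auto simp: image_iff length_Suc_conv)
  have inj: "inj_on (\<lambda>(h, t). h # t) (UNIV \<times> {t::'n list. length t = i})"
    by (auto simp: inj_on_def)
  show ?thesis
    unfolding lists sum.reindex[OF inj] by (simp add: sum.cartesian_product split_beta)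
qed

lemma finite_lists_length: "finite {l::'n::finite list. length l = i}"
  using finite_lists_length_eq[of "UNIV :: 'n set" i] by simp

definition tcontract :: "('n::finite \<Rightarrow> complex) \<Rightarrow> 'n tensor \<Rightarrow> 'n tensor" where
  "tcontract u a = (\<lambda>t. \<Sum>h\<in>UNIV. cnj (u h) * a (h # t))"

lemma tcontract_etensor: "tcontract u (etensor v a) = (\<lambda>l. vinner u v * a l)"
  by (simp add: tcontract_def etensor_def vinner_def sum_distrib_right mult.assoc)

lemma tinner_tcontract: "tinner i (tcontract w a) b = tinner (Suc i) a (etensor w b)"
  unfolding tinner_def tcontract_def sum_lists_length_Suc
  by (simp add: etensor_def sum_distrib_left sum_distrib_right algebra_simps sum.swap[of _ UNIV])

lemma Vfib_tcontract: "a \<in> Vfib L \<alpha> (Suc i) x \<Longrightarrow> tcontract u a \<in> Vfib L \<alpha> i x"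
  by (auto simp: tcontract_etensor intro: Vfib_scale)

section \<open>Adjoints on the fibres of D\<close>

lemma Dfib_dadd_dscale:
  assumes "line_bundle L" "a \<in> Dfib L \<alpha> r x" "b \<in> Dfib L \<alpha> r x"
  shows "dadd (dscale c a) b \<in> Dfib L \<alpha> r x"
  using assms Vfib_add[OF assms(1) Vfib_scale] unfolding Dfib_def dadd_def dscale_def by auto

lemma Dinner_dadd_dscale_left: "Dinner r (dadd (dscale c a) b) e = cnj c * Dinner r a e + Dinner r b e"
  unfolding Dinner_def tinner_def dadd_def dscale_def
  by (simp add: sum_distrib_left sum.distrib algebra_simps)

lemma Dinner_self_eq_zeroD:
  assumes a: "a \<in> Dfib L \<alpha> r x" and "Dinner r a a = 0"
  shows "a = (\<lambda>i l. 0)"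
proof -
  define N where "N i l = (cmod (a i l))\<^sup>2" for i l
  have "Dinner r a a = of_real (\<Sum>i<r. \<Sum>l\<in>{l. length l = i}. N i l)"
    unfolding Dinner_def tinner_def N_def of_real_sum complex_norm_square
    by (simp add: mult.commute)
  then have "(\<Sum>i<r. \<Sum>l\<in>{l. length l = i}. N i l) = 0"
    using \<open>Dinner r a a = 0\<close> by (metis of_real_eq_0_iff)
  then have "(\<Sum>l\<in>{l. length l = i}. N i l) = 0" if "i < r" for i
    using that by (simp add: N_def sum_nonneg_eq_0_iff sum_nonneg)
  then have N_zero: "N i l = 0" if "i < r" "length l = i" for i l
    using that by (simp add: N_def sum_nonneg_eq_0_iff finite_lists_length)
  have "a i l = 0" for i l
  proof (cases "i < r")
    case True
    then have "a i \<in> Vfib L \<alpha> i x" using a by (simp add: Dfib_def)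
    then show ?thesis using N_zero[OF True]
      by (cases "length l = i") (simp_all add: N_def Vfib_vanishes)
  qed (use a in \<open>simp add: Dfib_def\<close>)
  then show ?thesis by blast
qed

lemma op_adj_Dfib_eqI:
  assumes L: "line_bundle L" and c: "c \<in> Dfib L \<alpha> r x"
    and adj: "\<And>b. b \<in> Dfib L \<alpha> r x \<Longrightarrow> Dinner r c b = Dinner r a (T b)"
  shows "op_adj (Dfib L \<alpha> r x) (Dinner r) T a = c"
  unfolding op_adj_def
proof (rule the_equality)
  fix c'
  assume c': "c' \<in> Dfib L \<alpha> r x \<and> (\<forall>b\<in>Dfib L \<alpha> r x. Dinner r c' b = Dinner r a (T b))"
  define d where "d = dadd (dscale (-1) c') c"
  have d: "d \<in> Dfib L \<alpha> r x" unfolding d_def using Dfib_dadd_dscale[OF L] c' c by blast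
  have "Dinner r d d = 0"
    using c' adj[OF d] d unfolding d_def Dinner_dadd_dscale_left by simp
  then have "d = (\<lambda>i l. 0)" using Dinner_self_eq_zeroD[OF d] by blast
  then show "c' = c" by (simp add: d_def dadd_def dscale_def fun_eq_iff)
qed (use c adj in blast)

section \<open>Returns of a minimal homeomorphism\<close>

lemma continuous_on_funpow:
  fixes f :: "'a::topological_space \<Rightarrow> 'a"
  shows "continuous_on UNIV f \<Longrightarrow> continuous_on UNIV (f ^^ n)"
proof (induction n)
  case (Suc n)
  then show ?case using continuous_on_compose2[of UNIV f UNIV "f ^^ n"] by (simp add: comp_def)
qed simp

lemma homeomorphism_funpow_continuous:
  fixes \<alpha> \<beta> :: "'a::topological_space \<Rightarrow> 'a"
  assumes "homeomorphism UNIV UNIV \<alpha> \<beta>"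
  shows "continuous_on UNIV (\<beta> ^^ m \<circ> \<alpha> ^^ n)"
  using continuous_on_compose2[OF continuous_on_funpow[OF homeomorphism_cont2[OF assms]]
      continuous_on_funpow[OF homeomorphism_cont1[OF assms]] subset_UNIV]
  by (simp add: comp_def)

lemma funpow_left_inverse_funpow:
  assumes "\<And>x. g (f x) = x" and "m \<le> n"
  shows "(g ^^ m) ((f ^^ n) x) = (f ^^ (n - m)) x"
  using assms(2)
proof (induction m)
  case (Suc m)
  then have "n - m = Suc (n - Suc m)" by simp
  with Suc show ?case by (simp add: assms(1))
qed simp

lemma minimal_homeomorphism_orbit_cover:
  fixes \<alpha> \<beta> :: "'x::topological_space \<Rightarrow> 'x"
  assumes hom: "homeomorphism UNIV UNIV \<alpha> \<beta>" and "minimal_map \<alpha>"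
    and U: "open U" "U \<noteq> {}"
  shows "\<exists>m n. (\<beta> ^^ m) ((\<alpha> ^^ n) y) \<in> U"
proof -
  have ba: "\<beta> (\<alpha> x) = x" and ab: "\<alpha> (\<beta> x) = x" for x
    using hom by (simp_all add: homeomorphism_def)
  define W where "W = (\<Union>m n. (\<beta> ^^ m \<circ> \<alpha> ^^ n) -` U)"
  have W_iff: "x \<in> W \<longleftrightarrow> (\<exists>m n. (\<beta> ^^ m) ((\<alpha> ^^ n) x) \<in> U)" for x
    unfolding W_def by simp
  have "open W"
    unfolding W_def using open_vimage[OF U(1) homeomorphism_funpow_continuous[OF hom]]
    by (simp add: open_UN)
  have forward: "\<alpha> x \<in> W" if x: "x \<in> W" for x
  proof -
    obtain m n where "(\<beta> ^^ m) ((\<alpha> ^^ n) x) \<in> U" using x W_iff by blast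
    then have "(\<beta> ^^ Suc m) ((\<alpha> ^^ n) (\<alpha> x)) \<in> U"
      by (simp only: funpow_Suc_right comp_apply funpow_swap1[symmetric] ba)
    then show ?thesis using W_iff by blast
  qed
  have backward: "x \<in> W" if \<alpha>x: "\<alpha> x \<in> W" for x
  proof -
    obtain m n where "(\<beta> ^^ m) ((\<alpha> ^^ n) (\<alpha> x)) \<in> U" using \<alpha>x W_iff by blast
    then have "(\<beta> ^^ m) ((\<alpha> ^^ Suc n) x) \<in> U" by (simp only: funpow_Suc_right comp_apply)
    then show ?thesis using W_iff by blast
  qed
  have "\<alpha> ` (- W) = - W"
  proof
    show "\<alpha> ` (- W) \<subseteq> - W" using backward by blast
    show "- W \<subseteq> \<alpha> ` (- W)"
    proof
      fix z
      assume "z \<in> - W"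
      then have "\<beta> z \<in> - W" using forward[of "\<beta> z"] by (auto simp: ab)
      then show "z \<in> \<alpha> ` (- W)" using ab[of z] by (metis image_eqI)
    qed
  qed
  moreover have "closed (- W)" using \<open>open W\<close> by (simp add: closed_Compl)
  moreover have "U \<subseteq> W" using W_iff[of x for x] by (metis funpow_0 subsetI)
  ultimately have "- W = {}"
    using \<open>minimal_map \<alpha>\<close> U(2) unfolding minimal_map_def by blast
  then show ?thesis using W_iff by blast
qed

lemma minimal_homeomorphism_returns:
  fixes \<alpha> \<beta> :: "'x::topological_space \<Rightarrow> 'x"
  assumes "compact (UNIV :: 'x set)" and hom: "homeomorphism UNIV UNIV \<alpha> \<beta>"
    and "minimal_map \<alpha>" and U: "open U" "U \<noteq> {}"
  shows "\<exists>n\<ge>1. (\<alpha> ^^ n) y \<in> U"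
proof -
  define V where "V = (\<lambda>(m, n). (\<beta> ^^ m \<circ> \<alpha> ^^ n) -` U)"
  have "open (V mn)" for mn
    using open_vimage[OF U(1) homeomorphism_funpow_continuous[OF hom]] unfolding V_def
    by (simp add: case_prod_beta)
  moreover have "UNIV \<subseteq> (\<Union>mn. V mn)"
    using minimal_homeomorphism_orbit_cover[OF hom assms(3) U] unfolding V_def by fastforce
  ultimately obtain T where T: "finite T" "UNIV \<subseteq> (\<Union>mn\<in>T. V mn)"
    using compactE_image[OF assms(1)] by metis
  then obtain N where N: "\<forall>m\<in>fst ` T. m \<le> N" using finite_nat_set_iff_bounded_le by blast
  \<comment> \<open>the subcover bounds the backward exponents by N; use it at the point \<open>(\<alpha> ^^ Suc N) y\<close>\<close>
  obtain m n where "(m, n) \<in> T" "(\<beta> ^^ m) ((\<alpha> ^^ n) ((\<alpha> ^^ Suc N) y)) \<in> U"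
    using T(2) unfolding V_def by fastforce
  moreover have "m \<le> N" using N \<open>(m, n) \<in> T\<close> by force
  moreover have "(\<alpha> ^^ n) ((\<alpha> ^^ Suc N) y) = (\<alpha> ^^ (n + Suc N)) y"
    by (simp only: funpow_add comp_apply)
  ultimately have "(\<alpha> ^^ (n + Suc N - m)) y \<in> U"
    using funpow_left_inverse_funpow[of \<beta> \<alpha> m "n + Suc N" y] hom
    by (simp add: homeomorphism_def)
  moreover have "1 \<le> n + Suc N - m" using \<open>m \<le> N\<close> by simp
  ultimately show ?thesis by blast
qed

lemma first_return_mem:
  assumes "\<exists>n\<ge>1. (\<alpha> ^^ n) y \<in> Y"
  shows "(\<alpha> ^^ first_return \<alpha> Y y) y \<in> Y"
  using LeastI_ex[of "\<lambda>n. 1 \<le> n \<and> (\<alpha> ^^ n) y \<in> Y"] assms unfolding first_return_def by blast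

lemma closure_ret_piece_returns:
  assumes "continuous_on UNIV \<alpha>" "closed Y" and returns: "\<And>y. y \<in> Y \<Longrightarrow> \<exists>n\<ge>1. (\<alpha> ^^ n) y \<in> Y"
    and x: "x \<in> closure (ret_piece \<alpha> Y k)"
  shows "(\<alpha> ^^ ret_time \<alpha> Y k) x \<in> Y"
proof -
  have "(\<alpha> ^^ ret_time \<alpha> Y k) y \<in> Y" if "y \<in> ret_piece \<alpha> Y k" for y
    using first_return_mem[OF returns, of y] that by (simp add: ret_piece_def)
  then have "ret_piece \<alpha> Y k \<subseteq> (\<alpha> ^^ ret_time \<alpha> Y k) -` Y" by blast
  moreover have "closed ((\<alpha> ^^ ret_time \<alpha> Y k) -` Y)"
    using closed_vimage[OF assms(2) continuous_on_funpow[OF assms(1)]] .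
  ultimately show ?thesis using closure_minimal x by blast
qed

section \<open>The maps pi and tau\<close>

lemma EY_memD:
  assumes "\<xi> \<in> EY L \<alpha> Y" "line_bundle L" "continuous_on UNIV \<alpha>"
  shows EY_continuous: "continuous_on UNIV \<xi>"
    and EY_in_fibre: "\<xi> x \<in> L x"
    and EY_vanishes: "\<alpha> x \<in> Y \<Longrightarrow> \<xi> x = (\<lambda>j. 0)"
proof -
  obtain f \<xi>0 where \<xi>: "\<xi> = lact \<alpha> f \<xi>0" "f \<in> C0_compl Y" "\<xi>0 \<in> Esec L"
    using assms(1) unfolding EY_def by blast
  then have f: "continuous_on UNIV f" "\<And>y. y \<in> Y \<Longrightarrow> f y = 0"
    and \<xi>0: "continuous_on UNIV \<xi>0" "\<And>x. \<xi>0 x \<in> L x"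
    unfolding C0_compl_def Esec_def by auto
  have "continuous_on UNIV (\<lambda>x. f (\<alpha> x))"
    using continuous_on_compose2[OF f(1) assms(3) subset_UNIV] .
  then have "continuous_on UNIV (\<lambda>x. f (\<alpha> x) * \<xi>0 x j)" for j
    using continuous_on_product_then_coordinatewise[OF \<xi>0(1)] by (rule continuous_on_mult)
  then have "continuous_on UNIV (\<lambda>x j. f (\<alpha> x) * \<xi>0 x j)"
    by (rule continuous_on_coordinatewise_then_product)
  then show "continuous_on UNIV \<xi>" unfolding \<xi>(1) lact_def vscale_def .
  show "\<xi> x \<in> L x" unfolding \<xi>(1) lact_def using line_bundle_vscale_mem[OF assms(2) \<xi>0(2)] .
  show "\<xi> x = (\<lambda>j. 0)" if "\<alpha> x \<in> Y" unfolding \<xi>(1) lact_def vscale_def using f(2)[OF that] by simp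
qed

lemma EY_vanishes_before_return:
  assumes "\<xi> \<in> EY L \<alpha> Y" "line_bundle L" "continuous_on UNIV \<alpha>"
    and "(\<alpha> ^^ r) x \<in> Y" "0 < r"
  shows "\<xi> ((\<alpha> ^^ (r - 1)) x) = (\<lambda>j. 0)"
proof (rule EY_vanishes[OF assms(1-3)])
  have "\<alpha> ((\<alpha> ^^ (r - 1)) x) = (\<alpha> ^^ r) x"
    using \<open>0 < r\<close> by (metis Suc_pred' comp_apply funpow.simps(2))
  then show "\<alpha> ((\<alpha> ^^ (r - 1)) x) \<in> Y" using assms(4) by simp
qed

lemma pi_r_mem_Dfib: "a \<in> Dfib L \<alpha> r x \<Longrightarrow> pi_r \<alpha> f x a \<in> Dfib L \<alpha> r x"
  unfolding Dfib_def pi_r_def by (auto intro!: Vfib_scale)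

lemma tau_r_mem_Dfib:
  assumes L: "line_bundle L" and \<xi>: "\<And>x. \<xi> x \<in> L x" and a: "a \<in> Dfib L \<alpha> r x"
  shows "tau_r \<alpha> r \<xi> x a \<in> Dfib L \<alpha> r x"
proof -
  have "tau_r \<alpha> r \<xi> x a i \<in> Vfib L \<alpha> i x" if "i < r" for i
  proof (cases i)
    case 0
    then show ?thesis using Vfib_zero[OF L, of \<alpha> 0 x] by (simp add: tau_r_def del: Vfib.simps)
  next
    case (Suc j)
    have "a j \<in> Vfib L \<alpha> j x" using a that Suc by (simp add: Dfib_def)
    then show ?thesis using that Suc \<xi> by (auto simp: tau_r_def)
  qed
  then show ?thesis unfolding Dfib_def by (simp add: tau_r_def)
qed

lemma continuous_on_funpow_compose:
  fixes \<alpha> :: "'a::topological_space \<Rightarrow> 'a" and g :: "'a \<Rightarrow> 'b::topological_space"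
  assumes "continuous_on UNIV g" "continuous_on UNIV \<alpha>"
  shows "continuous_on Z (\<lambda>x. g ((\<alpha> ^^ i) x))"
  using continuous_on_compose2[OF assms(1) continuous_on_funpow[OF assms(2)] subset_UNIV]
  by (rule continuous_on_subset) simp

lemma continuous_on_dvec_coordinate:
  fixes a :: "'x::topological_space \<Rightarrow> 'n dvec"
  assumes "continuous_on Z a"
  shows "continuous_on Z (\<lambda>x. a x i l)"
  using continuous_on_product_then_coordinatewise[OF continuous_on_product_then_coordinatewise[OF assms]] .

lemma is_end_section_pi_r:
  assumes "line_bundle L" "continuous_on UNIV f" "continuous_on UNIV \<alpha>"
  shows "is_end_section Z (Dfib L \<alpha> r) (pi_r \<alpha> f)"
  unfolding is_end_section_def
proof (intro conjI ballI allI impI)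
  fix x a
  assume "a \<in> Dfib L \<alpha> r x"
  then show "pi_r \<alpha> f x a \<in> Dfib L \<alpha> r x" by (rule pi_r_mem_Dfib)
next
  fix x a b c
  show "pi_r \<alpha> f x (dadd (dscale c a) b) = dadd (dscale c (pi_r \<alpha> f x a)) (pi_r \<alpha> f x b)"
    by (simp add: pi_r_def dadd_def dscale_def algebra_simps)
next
  fix a :: "'a \<Rightarrow> 'b dvec"
  assume "continuous_on Z a \<and> (\<forall>x\<in>Z. a x \<in> Dfib L \<alpha> r x)"
  then have a: "continuous_on Z a" by blast
  have coords: "continuous_on Z (\<lambda>x. f ((\<alpha> ^^ i) x) * a x i l)" for i l
    using continuous_on_funpow_compose[OF assms(2,3)] continuous_on_dvec_coordinate[OF a]
    by (rule continuous_on_mult)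
  show "continuous_on Z (\<lambda>x. pi_r \<alpha> f x (a x))"
    unfolding pi_r_def by (rule continuous_on_coordinatewise_then_product)+ (rule coords)
qed

lemma is_end_section_tau_r:
  assumes "line_bundle L" "continuous_on UNIV \<xi>" "\<And>x. \<xi> x \<in> L x" "continuous_on UNIV \<alpha>"
  shows "is_end_section Z (Dfib L \<alpha> r) (tau_r \<alpha> r \<xi>)"
  unfolding is_end_section_def
proof (intro conjI ballI allI impI)
  fix x a
  assume "a \<in> Dfib L \<alpha> r x"
  then show "tau_r \<alpha> r \<xi> x a \<in> Dfib L \<alpha> r x" by (rule tau_r_mem_Dfib[OF assms(1,3)])
next
  fix x a b c
  show "tau_r \<alpha> r \<xi> x (dadd (dscale c a) b) = dadd (dscale c (tau_r \<alpha> r \<xi> x a)) (tau_r \<alpha> r \<xi> x b)"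
    by (auto simp: tau_r_def dadd_def dscale_def etensor_def fun_eq_iff algebra_simps split: list.split)
next
  fix a :: "'a \<Rightarrow> 'b dvec"
  assume "continuous_on Z a \<and> (\<forall>x\<in>Z. a x \<in> Dfib L \<alpha> r x)"
  then have a: "continuous_on Z a" by blast
  have "continuous_on Z (\<lambda>x. \<xi> ((\<alpha> ^^ (i - 1)) x) j * a x (i - 1) l)" for i j l
    using continuous_on_product_then_coordinatewise[OF continuous_on_funpow_compose[OF assms(2,4)]]
      continuous_on_dvec_coordinate[OF a]
    by (rule continuous_on_mult)
  then have coords: "continuous_on Z (\<lambda>x. tau_r \<alpha> r \<xi> x (a x) i l)" for i l
    by (cases "i = 0 \<or> r \<le> i"; cases l) (simp_all add: tau_r_def etensor_def)
  show "continuous_on Z (\<lambda>x. tau_r \<alpha> r \<xi> x (a x))"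
    by (rule continuous_on_coordinatewise_then_product)+ (rule coords)
qed

lemma pi_r_lincomb: "pi_r \<alpha> (\<lambda>x. c * f x + g x) = sadd (sscale c (pi_r \<alpha> f)) (pi_r \<alpha> g)"
  by (simp add: pi_r_def sadd_def sscale_def dadd_def dscale_def algebra_simps)

lemma pi_r_mult: "pi_r \<alpha> (\<lambda>x. f x * g x) = scomp (pi_r \<alpha> f) (pi_r \<alpha> g)"
  by (simp add: pi_r_def scomp_def algebra_simps)

lemma tau_r_lincomb:
  "tau_r \<alpha> r (\<lambda>x j. c * \<xi> x j + \<eta> x j) = sadd (sscale c (tau_r \<alpha> r \<xi>)) (tau_r \<alpha> r \<eta>)"
  by (auto simp: tau_r_def sadd_def sscale_def dadd_def dscale_def etensor_def fun_eq_iff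
      algebra_simps split: list.split)

lemma tau_r_lact_left: "tau_r \<alpha> r (lact \<alpha> f \<xi>) = scomp (pi_r \<alpha> f) (tau_r \<alpha> r \<xi>)"
proof (intro ext)
  fix x a i l
  show "tau_r \<alpha> r (lact \<alpha> f \<xi>) x a i l = scomp (pi_r \<alpha> f) (tau_r \<alpha> r \<xi>) x a i l"
    by (cases i; cases l) (auto simp: tau_r_def pi_r_def scomp_def lact_def vscale_def etensor_def)
qed

lemma pi_r_tau_r_commute: "scomp (pi_r \<alpha> f) (tau_r \<alpha> r \<xi>) = scomp (tau_r \<alpha> r \<xi>) (pi_r \<alpha> (f \<circ> \<alpha>))"
proof (intro ext)
  fix x a i l
  show "scomp (pi_r \<alpha> f) (tau_r \<alpha> r \<xi>) x a i l = scomp (tau_r \<alpha> r \<xi>) (pi_r \<alpha> (f \<circ> \<alpha>)) x a i l"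
    by (cases i; cases l)
      (auto simp: tau_r_def pi_r_def scomp_def etensor_def funpow_swap1)
qed

lemma sadj_pi_r:
  assumes "line_bundle L" "a \<in> Dfib L \<alpha> r x"
  shows "sadj r (Dfib L \<alpha> r) (pi_r \<alpha> f) x a = pi_r \<alpha> (\<lambda>x. cnj (f x)) x a"
  unfolding sadj_def
proof (rule op_adj_Dfib_eqI[OF assms(1) pi_r_mem_Dfib[OF assms(2)]])
  show "Dinner r (pi_r \<alpha> (\<lambda>x. cnj (f x)) x a) b = Dinner r a (pi_r \<alpha> f x b)" for b
    unfolding Dinner_def tinner_def pi_r_def by (intro sum.cong refl) (simp add: algebra_simps)
qed

definition tau_adj :: "('x \<Rightarrow> 'x) \<Rightarrow> nat \<Rightarrow> ('x \<Rightarrow> 'n::finite \<Rightarrow> complex) \<Rightarrow> 'x \<Rightarrow> 'n dvec \<Rightarrow> 'n dvec" where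
  "tau_adj \<alpha> r \<eta> x a =
     (\<lambda>j. if Suc j < r then tcontract (\<eta> ((\<alpha> ^^ j) x)) (a (Suc j)) else (\<lambda>l. 0))"

lemma tau_adj_mem_Dfib:
  assumes "line_bundle L" "a \<in> Dfib L \<alpha> r x"
  shows "tau_adj \<alpha> r \<eta> x a \<in> Dfib L \<alpha> r x"
  using assms by (auto simp: Dfib_def tau_adj_def Vfib_zero Vfib_tcontract)

lemma sadj_tau_r:
  assumes "line_bundle L" "a \<in> Dfib L \<alpha> r x"
  shows "sadj r (Dfib L \<alpha> r) (tau_r \<alpha> r \<eta>) x a = tau_adj \<alpha> r \<eta> x a"
  unfolding sadj_def
proof (rule op_adj_Dfib_eqI[OF assms(1) tau_adj_mem_Dfib[OF assms]])
  fix b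
  show "Dinner r (tau_adj \<alpha> r \<eta> x a) b = Dinner r a (tau_r \<alpha> r \<eta> x b)"
  proof (cases r)
    case (Suc r')
    have "Dinner r (tau_adj \<alpha> r \<eta> x a) b = (\<Sum>j<r'. tinner j (tau_adj \<alpha> r \<eta> x a j) (b j))"
      by (simp add: Dinner_def Suc tau_adj_def tinner_def)
    also have "\<dots> = (\<Sum>j<r'. tinner (Suc j) (a (Suc j)) (tau_r \<alpha> r \<eta> x b (Suc j)))"
      by (intro sum.cong refl) (simp add: Suc tau_adj_def tau_r_def tinner_tcontract)
    also have "\<dots> = Dinner r a (tau_r \<alpha> r \<eta> x b)"
      unfolding Dinner_def Suc sum.lessThan_Suc_shift by (simp add: tau_r_def tinner_def)
    finally show ?thesis .
  qed (simp add: Dinner_def)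
qed

lemma pi_r_rinner:
  assumes L: "line_bundle L" and \<eta>: "\<And>x. \<eta> x \<in> L x" and a: "a \<in> Dfib L \<alpha> r x"
    and \<xi>_last: "0 < r \<Longrightarrow> \<xi> ((\<alpha> ^^ (r - 1)) x) = (\<lambda>j. 0)"
  shows "pi_r \<alpha> (rinner \<xi> \<eta>) x a = sadj r (Dfib L \<alpha> r) (tau_r \<alpha> r \<xi>) x (tau_r \<alpha> r \<eta> x a)"
  unfolding sadj_tau_r[OF L tau_r_mem_Dfib[OF L \<eta> a]]
proof (intro ext)
  fix j l
  consider "Suc j < r" | "Suc j = r" | "r \<le> j" by linarith
  then show "pi_r \<alpha> (rinner \<xi> \<eta>) x a j l = tau_adj \<alpha> r \<xi> x (tau_r \<alpha> r \<eta> x a) j l"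
  proof cases
    case 1
    then show ?thesis by (simp add: pi_r_def tau_adj_def tau_r_def tcontract_etensor rinner_def)
  next
    case 2
    then show ?thesis using \<xi>_last by (auto simp: pi_r_def tau_adj_def rinner_def vinner_def)
  next
    case 3
    then show ?thesis using a by (simp add: pi_r_def tau_adj_def Dfib_def)
  qed
qed

lemma pi_r_linner:
  assumes L: "line_bundle L" and \<xi>: "\<And>x. \<xi> x \<in> L x" and a: "a \<in> Dfib L \<alpha> r x"
    and "inj \<alpha>" and \<xi>_prev: "\<xi> (inv \<alpha> x) = (\<lambda>j. 0)"
  shows "pi_r \<alpha> (linner \<alpha> \<xi> \<eta>) x a = tau_r \<alpha> r \<xi> x (sadj r (Dfib L \<alpha> r) (tau_r \<alpha> r \<eta>) x a)"
  unfolding sadj_tau_r[OF L a]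
proof (intro ext)
  fix i l
  consider "i = 0" | j where "i = Suc j" "Suc j < r" | "r \<le> i"
    by (cases i) force+
  then show "pi_r \<alpha> (linner \<alpha> \<xi> \<eta>) x a i l = tau_r \<alpha> r \<xi> x (tau_adj \<alpha> r \<eta> x a) i l"
  proof cases
    case 1
    then show ?thesis by (simp add: pi_r_def tau_r_def linner_def rinner_def vinner_def \<xi>_prev)
  next
    case (2 j)
    let ?\<xi> = "\<xi> ((\<alpha> ^^ j) x)" and ?\<eta> = "\<eta> ((\<alpha> ^^ j) x)"
    have "a (Suc j) \<in> Vfib L \<alpha> (Suc j) x" using a 2 unfolding Dfib_def by blast
    then obtain v b where ab: "a (Suc j) = etensor v b" and v: "v \<in> L ((\<alpha> ^^ j) x)" by auto
    have "linner \<alpha> \<xi> \<eta> ((\<alpha> ^^ Suc j) x) = vinner ?\<eta> ?\<xi>"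
      using \<open>inj \<alpha>\<close> by (simp add: linner_def rinner_def)
    moreover have "tau_adj \<alpha> r \<eta> x a j = (\<lambda>l. vinner ?\<eta> v * b l)"
      using 2 ab by (simp add: tau_adj_def tcontract_etensor)
    moreover have "vinner ?\<eta> ?\<xi> * v h = vinner ?\<eta> v * ?\<xi> h" for h
      using vinner_rank_one[OF L v \<xi>] .
    ultimately show ?thesis using 2 ab
      by (cases l) (simp_all add: pi_r_def tau_r_def etensor_def algebra_simps)
  next
    case 3
    then show ?thesis using a by (simp add: pi_r_def tau_r_def Dfib_def)
  qed
qed

theorem lemma7p3:
  fixes \<alpha> :: "'x::metric_space \<Rightarrow> 'x"
    and L :: "'x \<Rightarrow> ('n::finite \<Rightarrow> complex) set"
    and Y :: "'x set"
    and k :: nat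
  assumes "compact (UNIV :: 'x set)" and "infinite (UNIV :: 'x set)"
    and "\<exists>\<beta>. homeomorphism UNIV UNIV \<alpha> \<beta>" and "minimal_map \<alpha>"
    and "line_bundle L"
    and "closed Y" and "interior Y \<noteq> {}"
    and "1 \<le> k" and "k \<le> num_ret \<alpha> Y"
  defines "r \<equiv> ret_time \<alpha> Y k"
    and "Z \<equiv> closure (ret_piece \<alpha> Y k)"
    and "D \<equiv> Dfib L \<alpha> (ret_time \<alpha> Y k)"
  shows
    \<comment> \<open>(a) pi_k is a *-homomorphism C(X) \<rightarrow> \<Gamma>(M_k)\<close>
    "(\<forall>f. continuous_on UNIV f \<longrightarrow> is_end_section Z D (pi_r \<alpha> f)) \<and>
     (\<forall>f g c. continuous_on UNIV f \<longrightarrow> continuous_on UNIV g \<longrightarrow>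
        sect_eq Z D (pi_r \<alpha> (\<lambda>x. c * f x + g x)) (sadd (sscale c (pi_r \<alpha> f)) (pi_r \<alpha> g)) \<and>
        sect_eq Z D (pi_r \<alpha> (\<lambda>x. f x * g x)) (scomp (pi_r \<alpha> f) (pi_r \<alpha> g)) \<and>
        sect_eq Z D (pi_r \<alpha> (\<lambda>x. cnj (f x))) (sadj r D (pi_r \<alpha> f))) \<and>
     \<comment> \<open>(b) tau_k is linear E_Y \<rightarrow> \<Gamma>(M_k)\<close>
     (\<forall>\<xi>\<in>EY L \<alpha> Y. is_end_section Z D (tau_r \<alpha> r \<xi>)) \<and>
     (\<forall>\<xi>\<in>EY L \<alpha> Y. \<forall>\<eta>\<in>EY L \<alpha> Y. \<forall>c.
        sect_eq Z D (tau_r \<alpha> r (\<lambda>x. (\<lambda>j. c * \<xi> x j + \<eta> x j)))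
                    (sadd (sscale c (tau_r \<alpha> r \<xi>)) (tau_r \<alpha> r \<eta>))) \<and>
     \<comment> \<open>(c)\<close>
     (\<forall>\<xi>\<in>EY L \<alpha> Y. \<forall>\<eta>\<in>EY L \<alpha> Y.
        sect_eq Z D (pi_r \<alpha> (rinner \<xi> \<eta>)) (scomp (sadj r D (tau_r \<alpha> r \<xi>)) (tau_r \<alpha> r \<eta>))) \<and>
     \<comment> \<open>(d)\<close>
     (\<forall>f. \<forall>\<xi>\<in>EY L \<alpha> Y. continuous_on UNIV f \<longrightarrow>
        sect_eq Z D (tau_r \<alpha> r (lact \<alpha> f \<xi>)) (scomp (pi_r \<alpha> f) (tau_r \<alpha> r \<xi>)) \<and>
        sect_eq Z D (tau_r \<alpha> r (lact \<alpha> f \<xi>)) (scomp (tau_r \<alpha> r \<xi>) (pi_r \<alpha> (f \<circ> \<alpha>)))) \<and>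
     \<comment> \<open>(e)\<close>
     (\<forall>\<xi>\<in>EY L \<alpha> Y. \<forall>\<eta>\<in>EY L \<alpha> Y.
        sect_eq Z D (pi_r \<alpha> (linner \<alpha> \<xi> \<eta>)) (scomp (tau_r \<alpha> r \<xi>) (sadj r D (tau_r \<alpha> r \<eta>))))"
proof -
  obtain \<beta> where hom: "homeomorphism UNIV UNIV \<alpha> \<beta>" using assms(3) by blast
  then have cont: "continuous_on UNIV \<alpha>" and "inj \<alpha>" and "surj \<alpha>"
    by (auto simp: homeomorphism_def intro: inj_on_inverseI)
  note L = \<open>line_bundle L\<close>
  have "\<exists>n\<ge>1. (\<alpha> ^^ n) y \<in> Y" if "y \<in> Y" for y
    using minimal_homeomorphism_returns[OF assms(1) hom assms(4) open_interior assms(7)] interior_subset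
    by blast
  then have Z_returns: "(\<alpha> ^^ r) x \<in> Y" if "x \<in> Z" for x
    using closure_ret_piece_returns[OF cont assms(6)] that unfolding Z_def r_def by blast
  have "Z \<subseteq> Y"
    unfolding Z_def ret_piece_def using assms(6) by (simp add: closure_minimal)
  have EY: "continuous_on UNIV \<xi>" "\<And>x. \<xi> x \<in> L x" if "\<xi> \<in> EY L \<alpha> Y" for \<xi>
    using EY_continuous[OF that L cont] EY_in_fibre[OF that L cont] by auto
  have rinner_eq: "pi_r \<alpha> (rinner \<xi> \<eta>) x a = scomp (sadj r (Dfib L \<alpha> r) (tau_r \<alpha> r \<xi>)) (tau_r \<alpha> r \<eta>) x a"
    if "\<xi> \<in> EY L \<alpha> Y" "\<eta> \<in> EY L \<alpha> Y" "x \<in> Z" "a \<in> Dfib L \<alpha> r x" for \<xi> \<eta> x a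
    unfolding scomp_def using pi_r_rinner[where \<xi> = \<xi>, OF L EY(2)[OF that(2)] that(4)
        EY_vanishes_before_return[OF that(1) L cont Z_returns[OF that(3)]]] .
  have linner_eq: "pi_r \<alpha> (linner \<alpha> \<xi> \<eta>) x a = scomp (tau_r \<alpha> r \<xi>) (sadj r (Dfib L \<alpha> r) (tau_r \<alpha> r \<eta>)) x a"
    if "\<xi> \<in> EY L \<alpha> Y" "x \<in> Z" "a \<in> Dfib L \<alpha> r x" for \<xi> \<eta> x a
    using pi_r_linner[OF L EY(2)[OF that(1)] that(3) \<open>inj \<alpha>\<close>] EY_vanishes[OF that(1) L cont, of "inv \<alpha> x"]
      surj_f_inv_f[OF \<open>surj \<alpha>\<close>] that(2) \<open>Z \<subseteq> Y\<close>
    by (auto simp: scomp_def)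
  show ?thesis
    unfolding D_def r_def[symmetric] sect_eq_def
    by (auto simp: pi_r_lincomb pi_r_mult sadj_pi_r[OF L] tau_r_lincomb tau_r_lact_left pi_r_tau_r_commute
        rinner_eq linner_eq intro!: is_end_section_pi_r[OF L _ cont] is_end_section_tau_r[OF L _ _ cont] EY)
qed

end
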